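(* Let $G$ be a finite, connected, simple, bridgeless, triangle-free cubic graph, and let $\Lambda$ be a valid labeling of $\mathfrak{L}_2(G)$. Then for every $\gamma\in\Gamma_\Lambda$ the projected walk $W_\gamma$ is a closed walk in $G$, and every edge of $G$ occurs in total exactly twice among the projected walks $W_\gamma$, $\gamma\in\Gamma_\Lambda$.
   Context: $\mathcal{L}(H)$ is the line graph of $H$ (vertices = edges of $H$, adjacent iff sharing an endpoint). Let $\mathcal{T}$ be the set of triangles of $\mathcal{L}(\mathcal{L}(G))$ formed by the three edges of a triangle of $\mathcal{L}(G)$. $\mathfrak{L}_2(G)$ has the vertex set of $\mathcal{L}(\mathcal{L}(G))$ and the edges of $\mathcal{L}(\mathcal{L}(G))$ not lying in any triangle of $\mathcal{T}$. For an edge $e$ of $G$, the reduced clique $\mathbb{X}_e$ is the subgraph of $\mathfrak{L}_2(G)$ on the four edges of $\mathcal{L}(G)$ incident to $e$, with all edges of $\mathfrak{L}_2(G)$ among them (a 4-cycle). A labeling $\Lambda$ gives each edge of $\mathfrak{L}_2(G)$ a label in $\{0,1\}$ ($1$ = open); it is valid if in every reduced clique each vertex is incident to two edges of that clique with different labels. $\Gamma_\Lambda$ is the set of connected components (cycles) of the subgraph formed by the open edges. Projected walk: a vertex $f$ of $\mathfrak{L}_2(G)$ is an edge of $\mathcal{L}(G)$, i.e. an unordered pair of distinct edges of $G$ sharing an endpoint. If $\gamma$ has vertices $f_1,\dots,f_m$ in cyclic order, consecutive $f_j,f_{j+1}$ (indices mod $m$) share exactly one edge $e_j$ of $G$; the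 projected walk $W_\gamma$ is the cyclic sequence $(e_1,\dots,e_m)$ of edges of $G$. *)

theory Defs
  imports Main
begin

definition simple_graph :: "'v set \<Rightarrow> 'v set set \<Rightarrow> bool" where
  "simple_graph V E \<longleftrightarrow> finite V \<and>
     (\<forall>e\<in>E. \<exists>u v. u \<noteq> v \<and> u \<in> V \<and> v \<in> V \<and> e = {u, v})"

definition adj_rel :: "'v set set \<Rightarrow> ('v \<times> 'v) set" where
  "adj_rel E = {(u, v). {u, v} \<in> E}"

definition connected_graph :: "'v set \<Rightarrow> 'v set set \<Rightarrow> bool" where
  "connected_graph V E \<longleftrightarrow> (\<forall>u\<in>V. \<forall>v\<in>V. (u, v) \<in> (adj_rel E)\<^sup>*)"

definition cubic :: "'v set \<Rightarrow> 'v set set \<Rightarrow> bool" where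
  "cubic V E \<longleftrightarrow> (\<forall>v\<in>V. card {e\<in>E. v \<in> e} = 3)"

definition bridgeless :: "'v set \<Rightarrow> 'v set set \<Rightarrow> bool" where
  "bridgeless V E \<longleftrightarrow> (\<forall>e\<in>E. connected_graph V (E - {e}))"

definition triangle_free :: "'v set set \<Rightarrow> bool" where
  "triangle_free E \<longleftrightarrow>
     \<not> (\<exists>u v w. u \<noteq> v \<and> v \<noteq> w \<and> u \<noteq> w \<and> {u, v} \<in> E \<and> {v, w} \<in> E \<and> {u, w} \<in> E)"

text \<open>Edge set of the line graph of a graph with edge set EH (its vertex set is EH):
  unordered pairs of distinct edges sharing an endpoint.\<close>
definition line_edges :: "'a set set \<Rightarrow> 'a set set set" where
  "line_edges EH = {{x, y} | x y. x \<in> EH \<and> y \<in> EH \<and> x \<noteq> y \<and> x \<inter> y \<noteq> {}}"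

definition LG_triangle :: "'v set set \<Rightarrow> 'v set \<Rightarrow> 'v set \<Rightarrow> 'v set \<Rightarrow> bool" where
  "LG_triangle E x y z \<longleftrightarrow> x \<noteq> y \<and> y \<noteq> z \<and> x \<noteq> z \<and>
     {x, y} \<in> line_edges E \<and> {y, z} \<in> line_edges E \<and> {x, z} \<in> line_edges E"

text \<open>Edges of the reduced second line graph: edges of L(L(G)) not lying in any triangle of
  L(L(G)) formed by the three edges {x,y},{y,z},{x,z} of a triangle of L(G).\<close>
definition L2_edges :: "'v set set \<Rightarrow> 'v set set set set" where
  "L2_edges E = {a \<in> line_edges (line_edges E).
      \<not> (\<exists>x y z. LG_triangle E x y z \<and> a \<subseteq> {{x, y}, {y, z}, {x, z}})}"

abbreviation L2_verts :: "'v set set \<Rightarrow> 'v set set set" where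
  "L2_verts E \<equiv> line_edges E"

definition rc_verts :: "'v set set \<Rightarrow> 'v set \<Rightarrow> 'v set set set" where
  "rc_verts E e = {f \<in> line_edges E. e \<in> f}"

definition rc_edges :: "'v set set \<Rightarrow> 'v set \<Rightarrow> 'v set set set set" where
  "rc_edges E e = {a \<in> L2_edges E. a \<subseteq> rc_verts E e}"

text \<open>Labelings: labels in {0,1}, 1 = open.\<close>
definition labeling :: "'v set set \<Rightarrow> ('v set set set \<Rightarrow> nat) \<Rightarrow> bool" where
  "labeling E \<Lambda> \<longleftrightarrow> (\<forall>a\<in>L2_edges E. \<Lambda> a \<in> {0, 1})"

definition valid_labeling :: "'v set set \<Rightarrow> ('v set set set \<Rightarrow> nat) \<Rightarrow> bool" where
  "valid_labeling E \<Lambda> \<longleftrightarrow> labeling E \<Lambda> \<and>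
     (\<forall>e\<in>E. \<forall>f\<in>rc_verts E e. \<exists>a\<in>rc_edges E e. \<exists>b\<in>rc_edges E e.
         f \<in> a \<and> f \<in> b \<and> \<Lambda> a \<noteq> \<Lambda> b)"

definition open_edges :: "'v set set \<Rightarrow> ('v set set set \<Rightarrow> nat) \<Rightarrow> 'v set set set set" where
  "open_edges E \<Lambda> = {a \<in> L2_edges E. \<Lambda> a = 1}"

definition Gamma :: "'v set set \<Rightarrow> ('v set set set \<Rightarrow> nat) \<Rightarrow> 'v set set set set" where
  "Gamma E \<Lambda> = {{g \<in> L2_verts E. (f, g) \<in> (adj_rel (open_edges E \<Lambda>))\<^sup>*} | f. f \<in> L2_verts E}"

definition cyclic_order ::
  "'v set set \<Rightarrow> ('v set set set \<Rightarrow> nat) \<Rightarrow> 'v set set set \<Rightarrow> 'v set set list \<Rightarrow> bool" where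
  "cyclic_order E \<Lambda> \<gamma> fs \<longleftrightarrow> distinct fs \<and> set fs = \<gamma> \<and>
     (\<forall>i < length fs. {fs ! i, fs ! ((i + 1) mod length fs)} \<in> open_edges E \<Lambda>)"

definition proj_walk :: "'v set set list \<Rightarrow> 'v set list" where
  "proj_walk fs = map (\<lambda>i. the_elem (fs ! i \<inter> fs ! ((i + 1) mod length fs))) [0..<length fs]"

definition closed_walk :: "'v set set \<Rightarrow> 'v set list \<Rightarrow> bool" where
  "closed_walk E es \<longleftrightarrow> es \<noteq> [] \<and> (\<exists>vs. length vs = length es \<and>
     (\<forall>i < length es. es ! i \<in> E \<and> es ! i = {vs ! i, vs ! ((i + 1) mod length es)}))"

end

theory Submission
  imports Defs
begin

(* In a valid labeling, a vertex f = {e1, e2} of L2(G) lies in exactly the two reduced cliques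
   X_e1 and X_e2.  Inside X_e, cubicity leaves f at most two incident edges of L2(G), and validity
   makes exactly one of them open.  Hence the open edges of X_e form a perfect matching of its four
   vertices, so there are exactly two of them, and the open subgraph is 2-regular, so each of its
   components is a cycle.  Consecutive vertices f, g of such a cycle share one edge e of G, and the
   vertices of G common to the two edges in f, resp. in g, are the two distinct ends of e: otherwise
   the three edges involved would meet in one vertex, a triangle of L(G) whose triangle in L(L(G))
   was removed.  So these common vertices trace a closed walk along the projected edges, and e is
   traversed once for every open edge of X_e, i.e. twice in total. *)

section \<open>Cycle decomposition of 2-regular graphs\<close>

definition map_cycle_edges :: "('a set \<Rightarrow> 'b) \<Rightarrow> 'a list \<Rightarrow> 'b list" where
  "map_cycle_edges h xs = map (\<lambda>i. h {xs ! i, xs ! ((i + 1) mod length xs)}) [0..<length xs]"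

lemma mod_Suc_pred:
  fixes i n :: nat
  assumes "i < n"
  shows "((i + n - 1) mod n + 1) mod n = i"
proof -
  have "((i + n - 1) mod n + 1) mod n = (i + n - 1 + 1) mod n" by (rule mod_add_left_eq)
  also have "i + n - 1 + 1 = i + n" using assms by simp
  finally show ?thesis using assms by simp
qed

lemma mod_Suc_Suc_neq:
  fixes i n :: nat
  assumes "3 \<le> n" "i < n"
  shows "((i + 1) mod n + 1) mod n \<noteq> i"
proof -
  consider "i + 2 < n" | "i + 2 = n" | "i + 1 = n" using assms(2) by linarith
  then show ?thesis using assms(1) by cases auto
qed

lemma count_list_map_upt: "count_list (map f [0..<n]) b = card {i \<in> {..<n}. f i = b}"
proof (induction n)
  case 0
  then show ?case by simp
next
  case (Suc n)
  have "{i \<in> {..<Suc n}. f i = b} = {i \<in> {..<n}. f i = b} \<union> (if f n = b then {n} else {})"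
    by (auto simp: lessThan_Suc)
  then show ?case using Suc by auto
qed

locale two_regular =
  fixes V :: "'a set" and E :: "'a set set"
  assumes finite_V: "finite V"
    and edge_doubleton: "a \<in> E \<Longrightarrow> \<exists>x y. a = {x, y} \<and> x \<noteq> y \<and> x \<in> V \<and> y \<in> V"
    and card_nbrs_eq_2: "x \<in> V \<Longrightarrow> card {y. {x, y} \<in> E} = 2"
begin

definition nbrs :: "'a \<Rightarrow> 'a set" where
  "nbrs x = {y. {x, y} \<in> E}"

definition component :: "'a \<Rightarrow> 'a set" where
  "component x = {y \<in> V. (x, y) \<in> (adj_rel E)\<^sup>*}"

definition components :: "'a set set" where
  "components = component ` V"

definition is_path :: "'a list \<Rightarrow> bool" where
  "is_path xs \<longleftrightarrow> distinct xs \<and> set xs \<subseteq> V \<and> (\<forall>i. Suc i < length xs \<longrightarrow> {xs ! i, xs ! Suc i} \<in> E)"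

definition is_cycle :: "'a list \<Rightarrow> bool" where
  "is_cycle xs \<longleftrightarrow> distinct xs \<and> (\<forall>i < length xs. {xs ! i, xs ! ((i + 1) mod length xs)} \<in> E)"

lemma nbrs_sym: "y \<in> nbrs x \<longleftrightarrow> x \<in> nbrs y"
  by (simp add: nbrs_def insert_commute)

lemma nbrsD: "y \<in> nbrs x \<Longrightarrow> x \<in> V \<and> y \<in> V \<and> x \<noteq> y"
  unfolding nbrs_def using edge_doubleton by (fastforce simp: doubleton_eq_iff)

lemma card_nbrs: "x \<in> V \<Longrightarrow> card (nbrs x) = 2"
  using card_nbrs_eq_2 by (simp add: nbrs_def)

lemma nbrs_eq_doubleton:
  assumes "a \<in> nbrs x" "b \<in> nbrs x" "a \<noteq> b"
  shows "nbrs x = {a, b}"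
proof -
  have "card (nbrs x) = 2" using assms(1) nbrsD card_nbrs by blast
  then show ?thesis using assms by (auto simp: card_2_iff)
qed

lemma adj_rel_iff_nbrs: "(x, y) \<in> adj_rel E \<longleftrightarrow> y \<in> nbrs x"
  by (simp add: adj_rel_def nbrs_def)

lemma component_subset: "component x \<subseteq> V"
  by (auto simp: component_def)

lemma self_in_component: "x \<in> V \<Longrightarrow> x \<in> component x"
  by (simp add: component_def)

lemma component_nbrs_closed: "y \<in> component x \<Longrightarrow> z \<in> nbrs y \<Longrightarrow> z \<in> component x"
  unfolding component_def using nbrsD adj_rel_iff_nbrs by (auto intro: rtrancl_into_rtrancl)

lemma component_eq:
  assumes "y \<in> component x"
  shows "component y = component x"
proof -
  have sym: "sym ((adj_rel E)\<^sup>*)"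
    by (rule sym_rtrancl) (auto simp: sym_def adj_rel_iff_nbrs nbrs_sym)
  have "(x, y) \<in> (adj_rel E)\<^sup>*" using assms by (simp add: component_def)
  moreover from this have "(y, x) \<in> (adj_rel E)\<^sup>*" using sym by (meson symD)
  ultimately show ?thesis unfolding component_def by (auto intro: rtrancl_trans)
qed

lemma length_path_le: "is_path xs \<Longrightarrow> length xs \<le> card V"
  using finite_V by (metis is_path_def card_mono distinct_card)

lemma path_snoc:
  assumes "is_path xs" "xs \<noteq> []" "y \<in> nbrs (last xs)" "y \<notin> set xs"
  shows "is_path (xs @ [y])"
proof -
  have "{(xs @ [y]) ! i, (xs @ [y]) ! Suc i} \<in> E" if "Suc i < length xs + 1" for i
  proof (cases "Suc i < length xs")
    case True
    then show ?thesis using assms(1) by (simp add: is_path_def nth_append)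
  next
    case False
    then have "i = length xs - 1" using that by simp
    then show ?thesis using assms(2,3) by (simp add: nth_append last_conv_nth nbrs_def)
  qed
  then show ?thesis using assms nbrsD by (auto simp: is_path_def)
qed

lemma maximal_path_exists:
  assumes "x \<in> V"
  obtains xs where "is_path xs" "xs \<noteq> []" "hd xs = x" "nbrs (last xs) \<subseteq> set xs"
proof -
  let ?P = "\<lambda>xs. is_path xs \<and> xs \<noteq> [] \<and> hd xs = x"
  have "?P [x]" using assms by (simp add: is_path_def)
  moreover have "\<forall>xs. ?P xs \<longrightarrow> length xs < Suc (card V)"
    using length_path_le by (simp add: less_Suc_eq_le)
  ultimately obtain xs where xs: "?P xs" and longest: "\<And>ys. ?P ys \<Longrightarrow> length ys \<le> length xs"
    using ex_has_greatest_nat[of ?P "[x]" length] by blast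
  have "y \<in> set xs" if y: "y \<in> nbrs (last xs)" for y
  proof (rule ccontr)
    assume "y \<notin> set xs"
    then have "?P (xs @ [y])" using xs y path_snoc by simp
    then show False using longest by fastforce
  qed
  then show ?thesis using xs that by blast
qed

lemma inner_path_nbrs:
  assumes "is_path xs" "0 < j" "Suc j < length xs"
  shows "nbrs (xs ! j) = {xs ! (j - 1), xs ! Suc j}"
proof (rule nbrs_eq_doubleton)
  have "Suc (j - 1) = j" using assms(2) by simp
  then have "{xs ! (j - 1), xs ! j} \<in> E" "{xs ! j, xs ! Suc j} \<in> E"
    using assms(1,3) unfolding is_path_def by (metis Suc_lessD)+
  then show "xs ! (j - 1) \<in> nbrs (xs ! j)" "xs ! Suc j \<in> nbrs (xs ! j)"
    using assms(2) by (simp_all add: nbrs_def insert_commute)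
  show "xs ! (j - 1) \<noteq> xs ! Suc j"
    using assms by (simp add: is_path_def nth_eq_iff_index_eq)
qed

(* The second neighbour of the last vertex lies on the path but is not an inner vertex, whose two
   neighbours are already its path neighbours; so it is the first vertex. *)
lemma maximal_path_is_cycle:
  assumes path: "is_path xs" and "xs \<noteq> []" and closed: "nbrs (last xs) \<subseteq> set xs"
  shows "is_cycle xs" and "3 \<le> length xs"
proof -
  define n where "n = length xs"
  have last: "last xs = xs ! (n - 1)" using assms(2) by (simp add: n_def last_conv_nth)
  have dist: "distinct xs" using path by (simp add: is_path_def)
  have "last xs \<in> V" using path assms(2) by (auto simp: is_path_def)
  then have card_last: "card (nbrs (last xs)) = 2" by (rule card_nbrs)
  obtain y where y: "y \<in> nbrs (last xs)" "y \<noteq> xs ! (n - 2)"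
    using card_last by (metis card_2_iff insertCI)
  then obtain j where j: "j < n" "xs ! j = y" using closed by (metis in_set_conv_nth n_def subsetD)
  have "j \<noteq> n - 1" using y j last nbrsD by blast
  moreover have "j \<noteq> n - 2" using y j by blast
  ultimately have "j + 2 < n" using j(1) by arith
  have "j = 0"
  proof (rule ccontr)
    assume "j \<noteq> 0"
    then have "nbrs y = {xs ! (j - 1), xs ! Suc j}"
      using inner_path_nbrs[OF path, of j] j \<open>j + 2 < n\<close> by (simp add: n_def)
    moreover have "last xs \<in> nbrs y" using y nbrs_sym by blast
    ultimately show False
      using dist \<open>j + 2 < n\<close> last by (auto simp: n_def nth_eq_iff_index_eq)
  qed
  have "{xs ! i, xs ! ((i + 1) mod n)} \<in> E" if "i < n" for i
  proof (cases "i + 1 < n")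
    case True
    then show ?thesis using path by (simp add: is_path_def n_def)
  next
    case False
    then have "i + 1 = n" using that by simp
    then have "i = n - 1" "(i + 1) mod n = 0" by auto
    then show ?thesis using y j \<open>j = 0\<close> last by (simp add: nbrs_def)
  qed
  then show "is_cycle xs" using dist by (simp add: is_cycle_def n_def)
  show "3 \<le> length xs" using \<open>j + 2 < n\<close> \<open>j = 0\<close> by (simp add: n_def)
qed

lemma cycle_nbrs:
  assumes cyc: "is_cycle xs" and n: "3 \<le> length xs" and i: "i < length xs"
  shows "nbrs (xs ! i) = {xs ! ((i + 1) mod length xs), xs ! ((i + length xs - 1) mod length xs)}"
proof (rule nbrs_eq_doubleton)
  let ?n = "length xs"
  let ?p = "(i + ?n - 1) mod ?n"
  have "0 < ?n" using i by linarith
  then have p: "?p < ?n" "(?p + 1) mod ?n = i" using mod_Suc_pred[OF i] by simp_all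
  show "xs ! ((i + 1) mod ?n) \<in> nbrs (xs ! i)" using cyc i by (simp add: is_cycle_def nbrs_def)
  have "{xs ! ?p, xs ! ((?p + 1) mod ?n)} \<in> E" using cyc p(1) by (simp add: is_cycle_def)
  then show "xs ! ?p \<in> nbrs (xs ! i)" using p(2) by (simp add: nbrs_def insert_commute)
  have "(i + 1) mod ?n \<noteq> ?p" using mod_Suc_Suc_neq[OF n p(1)] p(2) by auto
  moreover have "(i + 1) mod ?n < ?n" using \<open>0 < ?n\<close> by simp
  ultimately show "xs ! ((i + 1) mod ?n) \<noteq> xs ! ?p"
    using cyc p(1) by (simp add: is_cycle_def nth_eq_iff_index_eq)
qed

lemma set_cycle_subset_component:
  assumes cyc: "is_cycle xs" and x: "x \<in> set xs"
  shows "set xs \<subseteq> component x"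
proof
  let ?n = "length xs"
  obtain k where k: "k < ?n" "xs ! k = x" using x by (auto simp: in_set_conv_nth)
  then have "0 < ?n" by linarith
  have "{xs ! k, xs ! ((k + 1) mod ?n)} \<in> E" using cyc k(1) by (simp add: is_cycle_def)
  then have "xs ! ((k + 1) mod ?n) \<in> nbrs x" using k(2) by (simp add: nbrs_def)
  then have "x \<in> V" using nbrsD by blast
  have reach: "xs ! ((k + m) mod ?n) \<in> component x" for m
  proof (induction m)
    case 0
    show ?case using k self_in_component \<open>x \<in> V\<close> by simp
  next
    case (Suc m)
    let ?i = "(k + m) mod ?n"
    have "?i < ?n" using \<open>0 < ?n\<close> by simp
    then have "xs ! ((?i + 1) mod ?n) \<in> nbrs (xs ! ?i)" using cyc by (simp add: is_cycle_def nbrs_def)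
    moreover have "(?i + 1) mod ?n = (k + Suc m) mod ?n" by (simp add: mod_Suc_eq)
    ultimately show ?case using Suc.IH component_nbrs_closed by metis
  qed
  fix y assume "y \<in> set xs"
  then obtain i where i: "i < ?n" "xs ! i = y" by (auto simp: in_set_conv_nth)
  then have "(k + (i + ?n - k)) mod ?n = i" using k by simp
  then show "y \<in> component x" using reach[of "i + ?n - k"] i by simp
qed

lemma component_subset_set_cycle:
  assumes cyc: "is_cycle xs" and n: "3 \<le> length xs" and x: "x \<in> set xs"
  shows "component x \<subseteq> set xs"
proof
  fix y assume "y \<in> component x"
  then have "(x, y) \<in> (adj_rel E)\<^sup>*" by (simp add: component_def)
  then show "y \<in> set xs"
  proof (induction rule: rtrancl_induct)
    case base
    show ?case by (rule x)
  next
    case (step y z)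
    then obtain i where "i < length xs" "xs ! i = y" by (auto simp: in_set_conv_nth)
    moreover have "0 < length xs" using n by linarith
    ultimately show ?case
      using step(2) cycle_nbrs[OF cyc n] by (auto simp: adj_rel_iff_nbrs)
  qed
qed

lemma set_cycle_eq_component:
  "is_cycle xs \<Longrightarrow> 3 \<le> length xs \<Longrightarrow> x \<in> set xs \<Longrightarrow> set xs = component x"
  by (intro equalityI set_cycle_subset_component component_subset_set_cycle)

lemma component_has_cycle:
  assumes "x \<in> V"
  shows "\<exists>xs. is_cycle xs \<and> set xs = component x"
proof -
  obtain xs where xs: "is_path xs" "xs \<noteq> []" "hd xs = x" "nbrs (last xs) \<subseteq> set xs"
    using maximal_path_exists[OF assms] .
  then have "is_cycle xs" "3 \<le> length xs" "x \<in> set xs"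
    using maximal_path_is_cycle hd_in_set by blast+
  then show ?thesis using set_cycle_eq_component by blast
qed

lemma three_le_length_cycle:
  assumes cyc: "is_cycle xs" and set: "set xs = component x" and x: "x \<in> V"
  shows "3 \<le> length xs"
proof -
  have "nbrs x \<subseteq> V" using nbrsD by blast
  then have "finite (nbrs x)" using finite_V by (rule finite_subset)
  moreover have "x \<notin> nbrs x" using nbrsD by blast
  ultimately have "card (insert x (nbrs x)) = 3" using card_nbrs[OF x] by simp
  moreover have "insert x (nbrs x) \<subseteq> component x"
    using self_in_component[OF x] component_nbrs_closed by blast
  moreover have "finite (component x)" using component_subset finite_V by (rule finite_subset)
  ultimately have "3 \<le> card (set xs)" using set by (metis card_mono)
  then show ?thesis using cyc by (simp add: is_cycle_def distinct_card)
qed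

lemma edges_in_cycle:
  assumes cyc: "is_cycle xs" and n: "3 \<le> length xs"
  shows "{a \<in> E. a \<subseteq> set xs} = (\<lambda>i. {xs ! i, xs ! ((i + 1) mod length xs)}) ` {..<length xs}"
    (is "_ = ?edge ` _")
proof
  let ?n = "length xs"
  have "0 < ?n" using n by linarith
  then show "?edge ` {..<?n} \<subseteq> {a \<in> E. a \<subseteq> set xs}" using cyc by (auto simp: is_cycle_def)
  show "{a \<in> E. a \<subseteq> set xs} \<subseteq> ?edge ` {..<?n}"
  proof
    fix a assume a: "a \<in> {a \<in> E. a \<subseteq> set xs}"
    then obtain y z where yz: "a = {y, z}" using edge_doubleton by blast
    then obtain i where i: "i < ?n" "xs ! i = y" using a by (auto simp: in_set_conv_nth)
    have "z \<in> nbrs (xs ! i)" using a i yz by (simp add: nbrs_def)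
    then consider "z = xs ! ((i + 1) mod ?n)" | "z = xs ! ((i + ?n - 1) mod ?n)"
      using cycle_nbrs[OF cyc n i(1)] by blast
    then show "a \<in> ?edge ` {..<?n}"
    proof cases
      case 1
      then show ?thesis using i yz by auto
    next
      case 2
      then have "a = ?edge ((i + ?n - 1) mod ?n)"
        using i yz mod_Suc_pred[OF i(1)] by auto
      moreover have "(i + ?n - 1) mod ?n < ?n" using \<open>0 < ?n\<close> by simp
      ultimately show ?thesis by blast
    qed
  qed
qed

lemma inj_on_cycle_edges:
  assumes cyc: "is_cycle xs" and n: "3 \<le> length xs"
  shows "inj_on (\<lambda>i. {xs ! i, xs ! ((i + 1) mod length xs)}) {..<length xs}"
proof (rule inj_onI)
  let ?n = "length xs"
  let ?s = "\<lambda>i. (i + 1) mod ?n"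
  fix i j assume i: "i \<in> {..<?n}" and j: "j \<in> {..<?n}"
    and eq: "{xs ! i, xs ! ?s i} = {xs ! j, xs ! ?s j}"
  have "0 < ?n" using n by linarith
  then have "?s i < ?n" "?s j < ?n" by simp_all
  with eq have "i = j \<or> i = ?s j \<and> ?s i = j"
    using i j cyc by (auto simp: is_cycle_def doubleton_eq_iff nth_eq_iff_index_eq)
  then show "i = j" using mod_Suc_Suc_neq[OF n, of i] i by auto
qed

lemma count_map_cycle_edges:
  assumes cyc: "is_cycle xs" and n: "3 \<le> length xs"
  shows "count_list (map_cycle_edges h xs) b = card {a \<in> E. a \<subseteq> set xs \<and> h a = b}"
proof -
  let ?n = "length xs"
  let ?edge = "\<lambda>i. {xs ! i, xs ! ((i + 1) mod ?n)}"
  let ?I = "{i \<in> {..<?n}. h (?edge i) = b}"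
  have "count_list (map_cycle_edges h xs) b = card ?I"
    unfolding map_cycle_edges_def by (rule count_list_map_upt)
  also have "\<dots> = card (?edge ` ?I)"
  proof (rule card_image[symmetric])
    show "inj_on ?edge ?I" using inj_on_cycle_edges[OF assms] by (rule inj_on_subset) blast
  qed
  also have "?edge ` ?I = {a \<in> ?edge ` {..<?n}. h a = b}" by blast
  also have "\<dots> = {a \<in> E. a \<subseteq> set xs \<and> h a = b}" by (simp only: edges_in_cycle[OF assms, symmetric]) blast
  finally show ?thesis .
qed

lemma finite_E: "finite E"
proof -
  have "E \<subseteq> Pow V" using edge_doubleton by blast
  then show ?thesis using finite_V by (meson finite_Pow_iff finite_subset)
qed

lemma components_eqI:
  assumes "\<gamma> \<in> components" "\<gamma>' \<in> components" "y \<in> \<gamma>" "y \<in> \<gamma>'"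
  shows "\<gamma> = \<gamma>'"
proof -
  obtain x x' where "\<gamma> = component x" "\<gamma>' = component x'"
    using assms(1,2) by (auto simp: components_def)
  then show ?thesis using assms(3,4) component_eq by metis
qed

lemma edge_subset_component:
  assumes "a \<in> E"
  obtains \<gamma> where "\<gamma> \<in> components" "a \<subseteq> \<gamma>"
proof -
  obtain y z where yz: "a = {y, z}" "y \<in> V" using assms edge_doubleton by blast
  then have "z \<in> nbrs y" using assms by (simp add: nbrs_def)
  then have "a \<subseteq> component y" using yz self_in_component component_nbrs_closed by blast
  moreover have "component y \<in> components" using yz(2) by (simp add: components_def)
  ultimately show ?thesis using that by blast
qed

lemma count_map_cycle_edges_component:
  assumes "\<gamma> \<in> components" "is_cycle xs" "set xs = \<gamma>"
  shows "count_list (map_cycle_edges h xs) b = card {a \<in> E. a \<subseteq> \<gamma> \<and> h a = b}"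
proof -
  obtain x where x: "x \<in> V" "\<gamma> = component x" using assms(1) by (auto simp: components_def)
  have "3 \<le> length xs" using three_le_length_cycle[OF assms(2) _ x(1)] assms(3) x(2) by simp
  with assms(2) have "count_list (map_cycle_edges h xs) b = card {a \<in> E. a \<subseteq> set xs \<and> h a = b}"
    by (rule count_map_cycle_edges)
  with assms(3) show ?thesis by simp
qed

lemma sum_count_map_cycle_edges:
  assumes cyc: "\<And>\<gamma>. \<gamma> \<in> components \<Longrightarrow> is_cycle (cyc \<gamma>) \<and> set (cyc \<gamma>) = \<gamma>"
  shows "(\<Sum>\<gamma>\<in>components. count_list (map_cycle_edges h (cyc \<gamma>)) b) = card {a \<in> E. h a = b}"
proof -
  let ?A = "\<lambda>\<gamma>. {a \<in> E. a \<subseteq> \<gamma> \<and> h a = b}"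
  have "(\<Sum>\<gamma>\<in>components. count_list (map_cycle_edges h (cyc \<gamma>)) b) = (\<Sum>\<gamma>\<in>components. card (?A \<gamma>))"
  proof (rule sum.cong[OF refl])
    fix \<gamma> assume \<gamma>: "\<gamma> \<in> components"
    then have "is_cycle (cyc \<gamma>)" "set (cyc \<gamma>) = \<gamma>" using cyc by simp_all
    with \<gamma> show "count_list (map_cycle_edges h (cyc \<gamma>)) b = card (?A \<gamma>)"
      by (rule count_map_cycle_edges_component)
  qed
  also have "\<dots> = card (\<Union>\<gamma>\<in>components. ?A \<gamma>)"
  proof (rule card_UN_disjoint[symmetric])
    show "finite components" using finite_V by (simp add: components_def)
    show "\<forall>\<gamma>\<in>components. finite (?A \<gamma>)" using finite_E by simp
    show "\<forall>\<gamma>\<in>components. \<forall>\<gamma>'\<in>components. \<gamma> \<noteq> \<gamma>' \<longrightarrow> ?A \<gamma> \<inter> ?A \<gamma>' = {}"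
    proof (intro ballI impI equals0I)
      fix \<gamma> \<gamma>' a assume \<gamma>: "\<gamma> \<in> components" "\<gamma>' \<in> components" and "\<gamma> \<noteq> \<gamma>'"
        and "a \<in> ?A \<gamma> \<inter> ?A \<gamma>'"
      then have a: "a \<in> E" "a \<subseteq> \<gamma>" "a \<subseteq> \<gamma>'" by simp_all
      then obtain y z where "a = {y, z}" using edge_doubleton by blast
      then have "y \<in> \<gamma>" "y \<in> \<gamma>'" using a(2,3) by simp_all
      then have "\<gamma> = \<gamma>'" by (rule components_eqI[OF \<gamma>])
      then show False using \<open>\<gamma> \<noteq> \<gamma>'\<close> by simp
    qed
  qed
  also have "(\<Union>\<gamma>\<in>components. ?A \<gamma>) = {a \<in> E. h a = b}"
  proof (intro equalityI subsetI)
    fix a assume a: "a \<in> {a \<in> E. h a = b}"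
    then have "a \<in> E" by simp
    then obtain \<gamma> where "\<gamma> \<in> components" "a \<subseteq> \<gamma>" by (rule edge_subset_component)
    then show "a \<in> (\<Union>\<gamma>\<in>components. ?A \<gamma>)" using a by blast
  qed blast
  finally show ?thesis .
qed

end

section \<open>The second line graph of a simple cubic graph\<close>

lemma proj_walk_eq_map_cycle_edges: "proj_walk fs = map_cycle_edges (\<lambda>a. the_elem (\<Inter> a)) fs"
  by (simp add: proj_walk_def map_cycle_edges_def)

definition common_vertex :: "'v set set \<Rightarrow> 'v" where
  "common_vertex f = the_elem (\<Inter> f)"

lemma line_edgesI: "x \<in> X \<Longrightarrow> y \<in> X \<Longrightarrow> x \<noteq> y \<Longrightarrow> x \<inter> y \<noteq> {} \<Longrightarrow> {x, y} \<in> line_edges X"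
  unfolding line_edges_def by blast

lemma line_edgesE:
  assumes "a \<in> line_edges X"
  obtains x y where "a = {x, y}" "x \<in> X" "y \<in> X" "x \<noteq> y" "x \<inter> y \<noteq> {}"
  using assms unfolding line_edges_def by blast

lemma line_edges_subset: "f \<in> line_edges E \<Longrightarrow> f \<subseteq> E"
  by (auto elim: line_edgesE)

lemma L2_edgeE:
  assumes "a \<in> L2_edges E"
  obtains f g where "a = {f, g}" "f \<noteq> g"
proof -
  have "a \<in> line_edges (line_edges E)" using assms by (simp add: L2_edges_def)
  then show ?thesis using that by (auto elim: line_edgesE)
qed

lemma L2_edge_at:
  assumes "a \<in> L2_edges E" "f \<in> a"
  obtains g where "a = {f, g}"
proof -
  obtain x y where "a = {x, y}" using assms(1) by (rule L2_edgeE)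
  then show ?thesis using that assms(2) by (auto simp: insert_commute)
qed

lemma L2_edge_line_edges:
  assumes "{f, g} \<in> L2_edges E"
  shows "f \<noteq> g" "f \<in> line_edges E" "g \<in> line_edges E" "f \<inter> g \<noteq> {}"
proof -
  have "{f, g} \<in> line_edges (line_edges E)" using assms by (simp add: L2_edges_def)
  then obtain x y where "{f, g} = {x, y}" "x \<in> line_edges E" "y \<in> line_edges E" "x \<noteq> y" "x \<inter> y \<noteq> {}"
    by (rule line_edgesE)
  then show "f \<noteq> g" "f \<in> line_edges E" "g \<in> line_edges E" "f \<inter> g \<noteq> {}"
    by (auto simp: doubleton_eq_iff)
qed

locale simple_cubic_graph =
  fixes V :: "'v set" and E :: "'v set set"
  assumes simple: "simple_graph V E" and cubic: "cubic V E"
begin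

lemma edgeE:
  assumes "e \<in> E"
  obtains u w where "u \<noteq> w" "u \<in> V" "w \<in> V" "e = {u, w}"
  using assms simple by (auto simp: simple_graph_def)

lemma finite_E: "finite E"
proof -
  have "E \<subseteq> Pow V" by (blast elim: edgeE)
  then show ?thesis using simple by (auto simp: simple_graph_def intro: finite_subset)
qed

lemma edge_eq_doubleton: "e \<in> E \<Longrightarrow> s \<in> e \<Longrightarrow> t \<in> e \<Longrightarrow> s \<noteq> t \<Longrightarrow> e = {s, t}"
  by (erule edgeE) auto

lemma card_other_edges_at:
  assumes "e \<in> E" "v \<in> e"
  shows "card ({p \<in> E. v \<in> p} - {e}) = 2"
proof -
  have "v \<in> V" using assms by (metis edgeE insertE singletonD)
  then have "card {p \<in> E. v \<in> p} = 3" using cubic by (simp add: cubic_def)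
  moreover have "finite {p \<in> E. v \<in> p}" using finite_E by simp
  ultimately show ?thesis using assms by (simp add: card_Diff_singleton)
qed

lemma line_vertexE:
  assumes f: "f \<in> line_edges E" and "e \<in> f"
  obtains p where "p \<in> E" "p \<noteq> e" "f = {e, p}" "e \<inter> p = {common_vertex f}"
proof -
  obtain p where p: "e \<in> E" "p \<in> E" "p \<noteq> e" "f = {e, p}" "e \<inter> p \<noteq> {}"
    using assms unfolding line_edges_def by (auto simp: Int_commute insert_commute)
  then obtain v where v: "v \<in> e \<inter> p" by blast
  have "e \<inter> p = {v}"
  proof (rule ccontr)
    assume "e \<inter> p \<noteq> {v}"
    then obtain w where "w \<in> e \<inter> p" "w \<noteq> v" using v by blast
    then have "e = {v, w}" "p = {v, w}" using v p(1,2) edge_eq_doubleton by blast+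
    then show False using p(3) by simp
  qed
  moreover from this have "common_vertex f = v" using p(4) by (simp add: common_vertex_def)
  ultimately show ?thesis using that p by blast
qed

lemma L2_edge_shapeE:
  assumes "{f, g} \<in> L2_edges E"
  obtains e p q where "e \<in> E" "p \<in> E" "q \<in> E" "p \<noteq> e" "q \<noteq> e" "p \<noteq> q"
    "f = {e, p}" "g = {e, q}" "e \<inter> p = {common_vertex f}" "e \<inter> q = {common_vertex g}"
proof -
  note fg = L2_edge_line_edges[OF assms]
  obtain e where e: "e \<in> f" "e \<in> g" using fg(4) by blast
  then have "e \<in> E" using fg(2) line_edges_subset by blast
  obtain p where p: "p \<in> E" "p \<noteq> e" "f = {e, p}" "e \<inter> p = {common_vertex f}"
    using line_vertexE[OF fg(2) e(1)] .
  obtain q where q: "q \<in> E" "q \<noteq> e" "g = {e, q}" "e \<inter> q = {common_vertex g}"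
    using line_vertexE[OF fg(3) e(2)] .
  have "p \<noteq> q" using fg(1) p(3) q(3) by auto
  show ?thesis by (rule that[OF \<open>e \<in> E\<close> p(1) q(1) p(2) q(2) \<open>p \<noteq> q\<close> p(3) q(3) p(4) q(4)])
qed

lemma common_vertex_L2_edge_neq:
  assumes "{f, g} \<in> L2_edges E"
  shows "common_vertex f \<noteq> common_vertex g"
proof
  assume eq: "common_vertex f = common_vertex g"
  have no_triangle: "\<not> (\<exists>x y z. LG_triangle E x y z \<and> {f, g} \<subseteq> {{x, y}, {y, z}, {x, z}})"
    using assms by (simp add: L2_edges_def)
  obtain e p q where "e \<in> E" "p \<in> E" "q \<in> E" "p \<noteq> e" "q \<noteq> e" "p \<noteq> q"
      and fg: "f = {e, p}" "g = {e, q}" and cv: "e \<inter> p = {common_vertex f}" "e \<inter> q = {common_vertex g}"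
    using assms by (rule L2_edge_shapeE)
  have "p \<inter> q \<noteq> {}" using cv eq by blast
  then have "{p, q} \<in> line_edges E" using \<open>p \<in> E\<close> \<open>q \<in> E\<close> \<open>p \<noteq> q\<close> by (intro line_edgesI)
  moreover have "{e, p} \<in> line_edges E" "{e, q} \<in> line_edges E"
    using L2_edge_line_edges(2,3)[OF assms] fg by simp_all
  ultimately have "LG_triangle E e p q"
    using \<open>p \<noteq> e\<close> \<open>q \<noteq> e\<close> \<open>p \<noteq> q\<close> unfolding LG_triangle_def by blast
  moreover have "{f, g} \<subseteq> {{e, p}, {p, q}, {e, q}}" using fg by blast
  ultimately show False using no_triangle by blast
qed

lemma L2_edge_shared_edge:
  assumes "{f, g} \<in> L2_edges E"
  shows "\<exists>e \<in> E. f \<inter> g = {e} \<and> e = {common_vertex f, common_vertex g}"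
proof -
  obtain e p q where "e \<in> E" and pq: "p \<noteq> e" "q \<noteq> e" "p \<noteq> q" "f = {e, p}" "g = {e, q}"
      and cv: "e \<inter> p = {common_vertex f}" "e \<inter> q = {common_vertex g}"
    using assms by (rule L2_edge_shapeE)
  from pq have "f \<inter> g = {e}" by auto
  moreover have "common_vertex f \<in> e" "common_vertex g \<in> e" using cv by blast+
  then have "e = {common_vertex f, common_vertex g}"
    using edge_eq_doubleton \<open>e \<in> E\<close> common_vertex_L2_edge_neq[OF assms] by blast
  ultimately show ?thesis using \<open>e \<in> E\<close> by blast
qed

lemma the_elem_Inter_L2_edge_eq_iff:
  assumes "a \<in> L2_edges E"
  shows "the_elem (\<Inter> a) = e \<longleftrightarrow> a \<subseteq> rc_verts E e"
proof -
  obtain f g where a: "a = {f, g}" using assms by (rule L2_edgeE)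
  then have "{f, g} \<in> L2_edges E" using assms by simp
  then obtain e' where "f \<inter> g = {e'}" "f \<in> line_edges E" "g \<in> line_edges E"
    using L2_edge_shared_edge L2_edge_line_edges by metis
  then show ?thesis using a by (auto simp: rc_verts_def)
qed

lemma L2_edge_subset_rc_verts:
  assumes "{f, g} \<in> L2_edges E"
  shows "the_elem (f \<inter> g) \<in> E" "{f, g} \<subseteq> rc_verts E (the_elem (f \<inter> g))"
proof -
  obtain e where "e \<in> E" "f \<inter> g = {e}" using L2_edge_shared_edge[OF assms] by blast
  then show "the_elem (f \<inter> g) \<in> E" "{f, g} \<subseteq> rc_verts E (the_elem (f \<inter> g))"
    using L2_edge_line_edges(2,3)[OF assms] by (auto simp: rc_verts_def)
qed

lemma closed_walk_proj_walk:
  assumes "fs \<noteq> []"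
    and L2: "\<And>i. i < length fs \<Longrightarrow> {fs ! i, fs ! ((i + 1) mod length fs)} \<in> L2_edges E"
  shows "closed_walk E (proj_walk fs)"
proof -
  let ?vs = "map common_vertex fs"
  have len: "length (proj_walk fs) = length fs" by (simp add: proj_walk_def)
  have "proj_walk fs ! i \<in> E \<and> proj_walk fs ! i = {?vs ! i, ?vs ! ((i + 1) mod length fs)}"
    if i: "i < length fs" for i
  proof -
    let ?j = "(i + 1) mod length fs"
    have "0 < length fs" using i by linarith
    then have "?j < length fs" by simp
    obtain e where "e \<in> E" "fs ! i \<inter> fs ! ?j = {e}"
        "e = {common_vertex (fs ! i), common_vertex (fs ! ?j)}"
      using L2_edge_shared_edge[OF L2[OF i]] by blast
    then show ?thesis using i \<open>?j < length fs\<close> by (simp add: proj_walk_def)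
  qed
  then show ?thesis using assms(1) len unfolding closed_walk_def by (metis length_map length_0_conv)
qed

lemma rc_verts_eq_image:
  assumes e: "e \<in> E"
  shows "rc_verts E e = (\<lambda>p. {e, p}) ` {p \<in> E. p \<noteq> e \<and> e \<inter> p \<noteq> {}}"
proof (intro equalityI subsetI)
  fix f assume "f \<in> rc_verts E e"
  then have "f \<in> line_edges E" "e \<in> f" by (simp_all add: rc_verts_def)
  then obtain p where "p \<in> E" "p \<noteq> e" "f = {e, p}" "e \<inter> p = {common_vertex f}"
    by (rule line_vertexE)
  then show "f \<in> (\<lambda>p. {e, p}) ` {p \<in> E. p \<noteq> e \<and> e \<inter> p \<noteq> {}}" by blast
next
  fix f assume "f \<in> (\<lambda>p. {e, p}) ` {p \<in> E. p \<noteq> e \<and> e \<inter> p \<noteq> {}}"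
  then obtain p where "f = {e, p}" "p \<in> E" "p \<noteq> e" "e \<inter> p \<noteq> {}" by blast
  then show "f \<in> rc_verts E e" using e by (simp add: rc_verts_def line_edgesI)
qed

lemma card_rc_verts:
  assumes e: "e \<in> E"
  shows "card (rc_verts E e) = 4"
proof -
  obtain u w where uw: "u \<noteq> w" "e = {u, w}" using e by (rule edgeE)
  define A where "A = {p \<in> E. u \<in> p} - {e}"
  define B where "B = {p \<in> E. w \<in> p} - {e}"
  have "card A = 2" "card B = 2" using card_other_edges_at e uw(2) by (simp_all add: A_def B_def)
  have "finite A" "finite B" using finite_E by (simp_all add: A_def B_def)
  have "A \<inter> B = {}"
  proof (rule ccontr)
    assume "A \<inter> B \<noteq> {}"
    then obtain p where p: "p \<in> E" "u \<in> p" "w \<in> p" "p \<noteq> e" by (auto simp: A_def B_def)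
    then have "p = {u, w}" using uw(1) by (intro edge_eq_doubleton)
    then show False using p(4) uw(2) by simp
  qed
  have "{p \<in> E. p \<noteq> e \<and> e \<inter> p \<noteq> {}} = A \<union> B" using uw(2) by (auto simp: A_def B_def)
  then have "rc_verts E e = (\<lambda>p. {e, p}) ` (A \<union> B)" using rc_verts_eq_image[OF e] by simp
  moreover have "inj_on (\<lambda>p. {e, p}) (A \<union> B)"
    by (rule inj_onI) (metis doubleton_eq_iff)
  ultimately have "card (rc_verts E e) = card A + card B"
    using \<open>A \<inter> B = {}\<close> \<open>finite A\<close> \<open>finite B\<close> by (simp add: card_image card_Un_disjoint)
  then show ?thesis using \<open>card A = 2\<close> \<open>card B = 2\<close> by simp
qed

(* For an edge {f, g} of X_e, the common vertices of f and of g are the two ends of e, so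
   g = {e, q} where q is one of the two other edges at the end of e not shared by f. *)
lemma card_rc_edges_at_le_2:
  assumes e: "e \<in> E" and f: "f \<in> rc_verts E e"
  shows "finite {a \<in> rc_edges E e. f \<in> a}" and "card {a \<in> rc_edges E e. f \<in> a} \<le> 2"
proof -
  have "f \<in> line_edges E" "e \<in> f" using f by (simp_all add: rc_verts_def)
  then obtain p where "e \<inter> p = {common_vertex f}" by (rule line_vertexE)
  then have "common_vertex f \<in> e" by blast
  then obtain t where t: "t \<in> e" "t \<noteq> common_vertex f" using e by (metis edgeE insertCI)
  define D where "D = {q \<in> E. t \<in> q} - {e}"
  have "card D = 2" "finite D" using card_other_edges_at[OF e t(1)] finite_E by (simp_all add: D_def)
  have "{a \<in> rc_edges E e. f \<in> a} \<subseteq> (\<lambda>q. {f, {e, q}}) ` D"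
  proof
    fix a assume a: "a \<in> {a \<in> rc_edges E e. f \<in> a}"
    then have "a \<in> L2_edges E" "a \<subseteq> rc_verts E e" "f \<in> a" by (simp_all add: rc_edges_def)
    then obtain g where g: "a = {f, g}" by (meson L2_edge_at)
    then have "e \<in> g" "g \<in> line_edges E" using \<open>a \<subseteq> rc_verts E e\<close> by (simp_all add: rc_verts_def)
    obtain e' where "f \<inter> g = {e'}" "e' = {common_vertex f, common_vertex g}"
      using L2_edge_shared_edge \<open>a \<in> L2_edges E\<close> g by blast
    then have "e = {common_vertex f, common_vertex g}" using \<open>e \<in> f\<close> \<open>e \<in> g\<close> by blast
    then have "t = common_vertex g" using t by blast
    obtain q where "q \<in> E" "q \<noteq> e" "g = {e, q}" "e \<inter> q = {common_vertex g}"
      using \<open>g \<in> line_edges E\<close> \<open>e \<in> g\<close> by (rule line_vertexE)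
    then have "q \<in> D" using \<open>t = common_vertex g\<close> by (auto simp: D_def)
    then show "a \<in> (\<lambda>q. {f, {e, q}}) ` D" using g \<open>g = {e, q}\<close> by blast
  qed
  moreover have "card ((\<lambda>q. {f, {e, q}}) ` D) \<le> 2" using \<open>card D = 2\<close> card_image_le \<open>finite D\<close> by metis
  ultimately show "finite {a \<in> rc_edges E e. f \<in> a}" "card {a \<in> rc_edges E e. f \<in> a} \<le> 2"
    using \<open>finite D\<close> by (auto intro: finite_subset dest: card_mono[rotated])
qed

end

section \<open>Valid labelings\<close>

locale valid_labeled_cubic_graph = simple_cubic_graph +
  fixes \<Lambda> :: "'v set set set \<Rightarrow> nat"
  assumes valid: "valid_labeling E \<Lambda>"
begin

lemma ex_open_edge_in_rc_at:
  assumes e: "e \<in> E" and f: "f \<in> rc_verts E e"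
  obtains a where "a \<in> open_edges E \<Lambda>" "a \<subseteq> rc_verts E e" "f \<in> a"
proof -
  obtain a b where ab: "a \<in> rc_edges E e" "b \<in> rc_edges E e" "f \<in> a" "f \<in> b" "\<Lambda> a \<noteq> \<Lambda> b"
    using valid e f unfolding valid_labeling_def by blast
  have "labeling E \<Lambda>" using valid by (simp add: valid_labeling_def)
  then have "\<Lambda> a \<in> {0, 1}" "\<Lambda> b \<in> {0, 1}" using ab(1,2) by (simp_all add: labeling_def rc_edges_def)
  then have "\<Lambda> a = 1 \<or> \<Lambda> b = 1" using ab(5) by auto
  then show ?thesis using that ab(1-4) by (auto simp: open_edges_def rc_edges_def)
qed

lemma open_edge_in_rc_at_unique:
  assumes e: "e \<in> E" and f: "f \<in> rc_verts E e"
    and c: "c \<in> open_edges E \<Lambda>" "c \<subseteq> rc_verts E e" "f \<in> c"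
    and c': "c' \<in> open_edges E \<Lambda>" "c' \<subseteq> rc_verts E e" "f \<in> c'"
  shows "c = c'"
proof (rule ccontr)
  assume "c \<noteq> c'"
  obtain a b where ab: "a \<in> rc_edges E e" "b \<in> rc_edges E e" "f \<in> a" "f \<in> b" "\<Lambda> a \<noteq> \<Lambda> b"
    using valid e f unfolding valid_labeling_def by blast
  let ?S = "{a \<in> rc_edges E e. f \<in> a}"
  have "{c, c'} \<subseteq> ?S" using c c' by (auto simp: open_edges_def rc_edges_def)
  moreover have "card {c, c'} = 2" using \<open>c \<noteq> c'\<close> by simp
  ultimately have "{c, c'} = ?S"
    using card_rc_edges_at_le_2[OF e f] by (metis card_seteq)
  then have "a \<in> {c, c'}" "b \<in> {c, c'}" using ab by blast+
  moreover have "\<Lambda> c = 1" "\<Lambda> c' = 1" using c(1) c'(1) by (simp_all add: open_edges_def)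
  ultimately show False using ab(5) by auto
qed

lemma open_edges_in_rc_partition:
  assumes e: "e \<in> E"
  shows "\<Union> {a \<in> open_edges E \<Lambda>. a \<subseteq> rc_verts E e} = rc_verts E e"
    and "pairwise disjnt {a \<in> open_edges E \<Lambda>. a \<subseteq> rc_verts E e}"
proof -
  let ?O = "{a \<in> open_edges E \<Lambda>. a \<subseteq> rc_verts E e}"
  show "\<Union> ?O = rc_verts E e"
  proof
    show "rc_verts E e \<subseteq> \<Union> ?O"
    proof
      fix f assume "f \<in> rc_verts E e"
      then obtain a where "a \<in> open_edges E \<Lambda>" "a \<subseteq> rc_verts E e" "f \<in> a"
        by (rule ex_open_edge_in_rc_at[OF e])
      then show "f \<in> \<Union> ?O" by blast
    qed
  qed blast
  show "pairwise disjnt ?O"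
  proof (rule pairwiseI)
    fix a b assume a: "a \<in> ?O" and b: "b \<in> ?O" and "a \<noteq> b"
    show "disjnt a b"
    proof (rule ccontr)
      assume "\<not> disjnt a b"
      then obtain f where "f \<in> a" "f \<in> b" by (auto simp: disjnt_def)
      moreover have "f \<in> rc_verts E e" using a \<open>f \<in> a\<close> by blast
      ultimately have "a = b" using a b open_edge_in_rc_at_unique[OF e] by blast
      then show False using \<open>a \<noteq> b\<close> by simp
    qed
  qed
qed

lemma card_open_edges_in_rc:
  assumes e: "e \<in> E"
  shows "card {a \<in> open_edges E \<Lambda>. a \<subseteq> rc_verts E e} = 2"
proof -
  let ?O = "{a \<in> open_edges E \<Lambda>. a \<subseteq> rc_verts E e}"
  have "finite (rc_verts E e)" using card_rc_verts[OF e] by (metis card.infinite zero_neq_numeral)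
  have "card a = 2" if "a \<in> ?O" for a
  proof -
    have "a \<in> L2_edges E" using that by (simp add: open_edges_def)
    then obtain f g where "a = {f, g}" "f \<noteq> g" by (rule L2_edgeE)
    then show ?thesis by simp
  qed
  moreover have "finite a" if "a \<in> ?O" for a
    using that \<open>finite (rc_verts E e)\<close> finite_subset by blast
  ultimately have "card (rc_verts E e) = 2 * card ?O"
    using card_Union_disjoint[of ?O] open_edges_in_rc_partition[OF e] by simp
  then show ?thesis using card_rc_verts[OF e] by simp
qed

lemma inj_on_shared_edge: "inj_on (\<lambda>g. the_elem (f \<inter> g)) {g. {f, g} \<in> open_edges E \<Lambda>}"
proof (rule inj_onI)
  fix g g' assume "g \<in> {g. {f, g} \<in> open_edges E \<Lambda>}" "g' \<in> {g. {f, g} \<in> open_edges E \<Lambda>}"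
    and eq: "the_elem (f \<inter> g) = the_elem (f \<inter> g')"
  then have opn: "{f, g} \<in> open_edges E \<Lambda>" "{f, g'} \<in> open_edges E \<Lambda>" by simp_all
  then have "{f, g} \<in> L2_edges E" "{f, g'} \<in> L2_edges E" by (simp_all add: open_edges_def)
  from L2_edge_subset_rc_verts[OF this(1)] L2_edge_subset_rc_verts(2)[OF this(2)] eq
  have e: "the_elem (f \<inter> g) \<in> E" and sub: "{f, g} \<subseteq> rc_verts E (the_elem (f \<inter> g))"
    "{f, g'} \<subseteq> rc_verts E (the_elem (f \<inter> g))"
    by simp_all
  have "f \<in> rc_verts E (the_elem (f \<inter> g))" using sub(1) by simp
  from open_edge_in_rc_at_unique[OF e this opn(1) sub(1) _ opn(2) sub(2)]
  have "{f, g} = {f, g'}" by simp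
  then show "g = g'" by (metis doubleton_eq_iff)
qed

lemma shared_edges_eq:
  assumes f: "f \<in> line_edges E"
  shows "(\<lambda>g. the_elem (f \<inter> g)) ` {g. {f, g} \<in> open_edges E \<Lambda>} = f"
proof
  show "(\<lambda>g. the_elem (f \<inter> g)) ` {g. {f, g} \<in> open_edges E \<Lambda>} \<subseteq> f"
  proof (rule image_subsetI)
    fix g assume "g \<in> {g. {f, g} \<in> open_edges E \<Lambda>}"
    then have "{f, g} \<in> L2_edges E" by (simp add: open_edges_def)
    from L2_edge_subset_rc_verts(2)[OF this] show "the_elem (f \<inter> g) \<in> f" by (simp add: rc_verts_def)
  qed
  show "f \<subseteq> (\<lambda>g. the_elem (f \<inter> g)) ` {g. {f, g} \<in> open_edges E \<Lambda>}"
  proof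
    fix e assume "e \<in> f"
    then have "e \<in> E" "f \<in> rc_verts E e" using f line_edges_subset by (auto simp: rc_verts_def)
    then obtain a where a: "a \<in> open_edges E \<Lambda>" "a \<subseteq> rc_verts E e" "f \<in> a"
      by (rule ex_open_edge_in_rc_at)
    have "a \<in> L2_edges E" using a(1) by (simp add: open_edges_def)
    then obtain g where g: "a = {f, g}" using a(3) by (rule L2_edge_at)
    have "the_elem (\<Inter> a) = e" using the_elem_Inter_L2_edge_eq_iff[OF \<open>a \<in> L2_edges E\<close>] a(2) by simp
    then have "e = the_elem (f \<inter> g)" using g by simp
    moreover have "g \<in> {g. {f, g} \<in> open_edges E \<Lambda>}" using a(1) g by simp
    ultimately show "e \<in> (\<lambda>g. the_elem (f \<inter> g)) ` {g. {f, g} \<in> open_edges E \<Lambda>}"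
      by (rule image_eqI)
  qed
qed

lemma card_open_nbrs:
  assumes f: "f \<in> line_edges E"
  shows "card {g. {f, g} \<in> open_edges E \<Lambda>} = 2"
proof -
  have "bij_betw (\<lambda>g. the_elem (f \<inter> g)) {g. {f, g} \<in> open_edges E \<Lambda>} f"
    using inj_on_shared_edge shared_edges_eq[OF f] by (rule bij_betw_imageI)
  then have "card {g. {f, g} \<in> open_edges E \<Lambda>} = card f" by (rule bij_betw_same_card)
  moreover obtain x y where "f = {x, y}" "x \<noteq> y" using f by (rule line_edgesE)
  ultimately show ?thesis by simp
qed

lemma two_regular_open_edges: "two_regular (line_edges E) (open_edges E \<Lambda>)"
proof (unfold_locales)
  have "line_edges E \<subseteq> Pow E" using line_edges_subset by blast
  then show "finite (line_edges E)" by (rule finite_subset) (simp add: finite_E)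
next
  fix a assume "a \<in> open_edges E \<Lambda>"
  then have "a \<in> L2_edges E" by (simp add: open_edges_def)
  then obtain f g where fg: "a = {f, g}" "f \<noteq> g" by (rule L2_edgeE)
  then have "{f, g} \<in> L2_edges E" using \<open>a \<in> L2_edges E\<close> by simp
  note L2_edge_line_edges(2,3)[OF this]
  then show "\<exists>x y. a = {x, y} \<and> x \<noteq> y \<and> x \<in> line_edges E \<and> y \<in> line_edges E"
    using fg by (intro exI[of _ f] exI[of _ g]) simp
next
  fix f assume "f \<in> line_edges E"
  then show "card {g. {f, g} \<in> open_edges E \<Lambda>} = 2" by (rule card_open_nbrs)
qed

sublocale open_subgraph: two_regular "line_edges E" "open_edges E \<Lambda>"
  by (rule two_regular_open_edges)

lemma Gamma_eq_components: "Gamma E \<Lambda> = open_subgraph.components"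
  unfolding Gamma_def open_subgraph.components_def open_subgraph.component_def
  by (rule Setcompr_eq_image)

lemma cyclic_order_iff: "cyclic_order E \<Lambda> \<gamma> fs \<longleftrightarrow> open_subgraph.is_cycle fs \<and> set fs = \<gamma>"
  by (auto simp: cyclic_order_def open_subgraph.is_cycle_def)

lemma closed_walk_proj_walk_cyclic_order:
  assumes "\<gamma> \<in> Gamma E \<Lambda>" and "cyclic_order E \<Lambda> \<gamma> fs"
  shows "closed_walk E (proj_walk fs)"
proof (rule closed_walk_proj_walk)
  obtain f where "f \<in> line_edges E" "\<gamma> = open_subgraph.component f"
    using assms(1) by (auto simp: Gamma_eq_components open_subgraph.components_def)
  then have "f \<in> set fs" using assms(2) open_subgraph.self_in_component by (simp add: cyclic_order_def)
  then show "fs \<noteq> []" by auto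
  show "{fs ! i, fs ! ((i + 1) mod length fs)} \<in> L2_edges E" if "i < length fs" for i
    using assms(2) that by (simp add: cyclic_order_def open_edges_def)
qed

lemma sum_count_proj_walks:
  assumes ord: "\<forall>\<gamma> \<in> Gamma E \<Lambda>. cyclic_order E \<Lambda> \<gamma> (ord \<gamma>)" and e: "e \<in> E"
  shows "(\<Sum>\<gamma> \<in> Gamma E \<Lambda>. count_list (proj_walk (ord \<gamma>)) e) = 2"
proof -
  have "(\<Sum>\<gamma> \<in> Gamma E \<Lambda>. count_list (proj_walk (ord \<gamma>)) e)
      = card {a \<in> open_edges E \<Lambda>. the_elem (\<Inter> a) = e}"
    unfolding proj_walk_eq_map_cycle_edges Gamma_eq_components
    using ord by (intro open_subgraph.sum_count_map_cycle_edges) (simp add: Gamma_eq_components cyclic_order_iff)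
  also have "{a \<in> open_edges E \<Lambda>. the_elem (\<Inter> a) = e} = {a \<in> open_edges E \<Lambda>. a \<subseteq> rc_verts E e}"
    using the_elem_Inter_L2_edge_eq_iff by (auto simp: open_edges_def)
  also have "card \<dots> = 2" using e by (rule card_open_edges_in_rc)
  finally show ?thesis .
qed

end

theorem lemma2p9:
  fixes V :: "'v set" and E :: "'v set set"
    and \<Lambda> :: "'v set set set \<Rightarrow> nat"
  assumes "simple_graph V E" and "connected_graph V E" and "bridgeless V E"
    and "triangle_free E" and "cubic V E"
    and "valid_labeling E \<Lambda>"
  shows "(\<forall>\<gamma>\<in>Gamma E \<Lambda>. \<exists>fs. cyclic_order E \<Lambda> \<gamma> fs)
    \<and> (\<forall>\<gamma>\<in>Gamma E \<Lambda>. \<forall>fs. cyclic_order E \<Lambda> \<gamma> fs \<longrightarrow> closed_walk E (proj_walk fs))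
    \<and> (\<forall>ord. (\<forall>\<gamma>\<in>Gamma E \<Lambda>. cyclic_order E \<Lambda> \<gamma> (ord \<gamma>)) \<longrightarrow>
         (\<forall>e\<in>E. (\<Sum>\<gamma>\<in>Gamma E \<Lambda>. count_list (proj_walk (ord \<gamma>)) e) = 2))"
proof -
  interpret valid_labeled_cubic_graph V E \<Lambda>
    using assms(1,5,6) by unfold_locales
  have "\<exists>fs. cyclic_order E \<Lambda> \<gamma> fs" if "\<gamma> \<in> Gamma E \<Lambda>" for \<gamma>
    using that open_subgraph.component_has_cycle
    by (auto simp: Gamma_eq_components open_subgraph.components_def cyclic_order_iff)
  then show ?thesis using closed_walk_proj_walk_cyclic_order sum_count_proj_walks by blast
qed

end
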